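(* Consider the binary asymmetric channel with a single error and one-time feedback, with $n=n_1+n_2$. Suppose that for each $w\in\{0,1,\ldots,n_1\}$ there is a nonadaptive code of length $n_2$ correcting one asymmetric error with $M_w$ codewords and $F_w$ free points, and assign this code to every input sequence $u\in\{0,1\}^{n_1}$ of Hamming weight $w$ (so that $M(u)=M_w$ and $F(u)=F_w$ depend only on the weight of $u$). If $$(n_1-w)M_{w+1}\le F_w\quad\text{for all } w\in[0,n_1-1],$$ then a single-error-correcting strategy of length $n$ with one-time feedback after the first $n_1$ symbols transmits $$M=\sum_{w=0}^{n_1}\binom{n_1}{w}M_w$$ messages.
   Context: Binary asymmetric channel: alphabet $\{0,1\}$; a transmitted 1 may be received as 0, while a transmitted 0 is always received correctly; "a single error" means at most one such error in the whole transmission. A strategy with one-time feedback after $n_1$ symbols for messages $m\in[M]$: the first $n_1$ transmitted symbols depend only on $m$; then the encoder learns the $n_1$ received symbols (error-free, instantaneously), and the remaining $n_2$ symbols depend on $m$ and those received symbols; it transmits $M$ messages if the sets of output sequences reachable from distinct messages with at most one error are pairwise disjoint. A nonadaptive code of length $n_2$ correcting one asymmetric error is a set of codewords in $\{0,1\}^{n_2}$ whose clouds (sets of words obtainable from the codeword by at most one $1\to0$ change) are pairwise disjoint; its free points are the words of $\{0,1\}^{n_2}$ in no cloud. *)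

theory Defs
  imports Main
begin

text \<open>Binary words are lists of booleans (True = 1, False = 0).
  The cloud of a word x: all words obtainable from x by at most one change 1 to 0.\<close>
definition cloud :: "bool list \<Rightarrow> bool list set" where
  "cloud x = insert x {x[i := False] | i. i < length x \<and> x ! i}"

definition asym_code :: "nat \<Rightarrow> bool list set \<Rightarrow> bool" where
  "asym_code n C \<longleftrightarrow> C \<subseteq> {x. length x = n} \<and>
     (\<forall>c\<in>C. \<forall>d\<in>C. c \<noteq> d \<longrightarrow> cloud c \<inter> cloud d = {})"

definition free_points :: "nat \<Rightarrow> bool list set \<Rightarrow> bool list set" where
  "free_points n C = {x. length x = n} - (\<Union>c\<in>C. cloud c)"

text \<open>Output sequences reachable from message m with at most one error, for a strategy
  with one-time feedback after n1 symbols: f1 m is the first block, f2 m y1 the second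
  block given the received first block y1.  If an error occurred in the first block,
  the second block is received correctly; otherwise the second block may suffer one error.\<close>
definition outputs ::
  "(nat \<Rightarrow> bool list) \<Rightarrow> (nat \<Rightarrow> bool list \<Rightarrow> bool list) \<Rightarrow> nat \<Rightarrow> bool list set" where
  "outputs f1 f2 m = {y1 @ y2 | y1 y2. y1 \<in> cloud (f1 m) \<and>
      (if y1 = f1 m then y2 \<in> cloud (f2 m y1) else y2 = f2 m y1)}"

definition transmits ::
  "nat \<Rightarrow> nat \<Rightarrow> nat \<Rightarrow> (nat \<Rightarrow> bool list) \<Rightarrow> (nat \<Rightarrow> bool list \<Rightarrow> bool list) \<Rightarrow> bool" where
  "transmits n1 n2 M f1 f2 \<longleftrightarrow>
     (\<forall>m<M. length (f1 m) = n1 \<and> (\<forall>y. length y = n1 \<longrightarrow> length (f2 m y) = n2)) \<and>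
     (\<forall>m<M. \<forall>m'<M. m \<noteq> m' \<longrightarrow> outputs f1 f2 m \<inter> outputs f1 f2 m' = {})"

end

theory Submission
  imports Defs
begin

text \<open>Messages are the pairs (u, c) of a first block u and a codeword c of the code assigned to u.
  If the first block is received as sent, the second block is c and the code corrects one error in it.
  Otherwise the single error has been spent, the receiver knows the received word y, and the senders
  that can produce y are the words u = y with one 0 raised to 1, which all have weight w(y) + 1;
  there are at most (n1 - w(y)) M(w(y)+1) of them, so they can be given pairwise distinct free
  points of the code of weight w(y) as their error-free second block.\<close>

definition weight :: "bool list \<Rightarrow> nat" where
  "weight u = card {i. i < length u \<and> u ! i}"

lemma length_cloud: "y \<in> cloud x \<Longrightarrow> length y = length x"
  unfolding cloud_def by auto

lemma finite_words: "finite {x :: bool list. length x = n}"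
  using finite_lists_length_eq[of "UNIV :: bool set" n] by simp

lemma finite_asym_code: "asym_code n C \<Longrightarrow> finite C"
  unfolding asym_code_def using finite_subset[OF _ finite_words] by blast

lemma finite_free_points: "finite (free_points n C)"
  unfolding free_points_def using finite_words by blast

lemma weight_le_length: "weight u \<le> length u"
  unfolding weight_def by (rule card_mono[of "{..<length u}", simplified]) auto

lemma card_zero_positions: "card {i. i < length y \<and> \<not> y ! i} = length y - weight y"
proof -
  have "{i. i < length y \<and> \<not> y ! i} = {..<length y} - {i. i < length y \<and> y ! i}"
    by auto
  also have "card \<dots> = length y - weight y"
    unfolding weight_def by (subst card_Diff_subset) auto
  finally show ?thesis .
qed

definition parents :: "bool list \<Rightarrow> bool list set" where
  "parents y = {x. y \<in> cloud x \<and> y \<noteq> x}"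

lemma length_parent: "x \<in> parents y \<Longrightarrow> length x = length y"
  unfolding parents_def by (metis length_cloud mem_Collect_eq)

lemma parents_eq_image:
  "parents y = (\<lambda>j. y[j := True]) ` {j. j < length y \<and> \<not> y ! j}"
  unfolding parents_def
proof (rule equalityI)
  show "{x. y \<in> cloud x \<and> y \<noteq> x} \<subseteq> (\<lambda>j. y[j := True]) ` {j. j < length y \<and> \<not> y ! j}"
  proof
    fix x assume "x \<in> {x. y \<in> cloud x \<and> y \<noteq> x}"
    then obtain i where "i < length x" "x ! i" "y = x[i := False]"
      unfolding cloud_def by auto
    then have "i < length y" "\<not> y ! i" "x = y[i := True]"
      by (simp_all, metis list_update_id list_update_overwrite)
    then show "x \<in> (\<lambda>j. y[j := True]) ` {j. j < length y \<and> \<not> y ! j}"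
      by blast
  qed
  show "(\<lambda>j. y[j := True]) ` {j. j < length y \<and> \<not> y ! j} \<subseteq> {x. y \<in> cloud x \<and> y \<noteq> x}"
  proof (rule image_subsetI)
    fix j assume j: "j \<in> {j. j < length y \<and> \<not> y ! j}"
    then have "(y[j := True])[j := False] = y"
      using list_update_id[of y j] by simp
    with j have "y \<in> cloud (y[j := True])"
      unfolding cloud_def by (intro insertI2 CollectI exI[of _ j]) auto
    moreover have "y \<noteq> y[j := True]"
      using j by (metis mem_Collect_eq nth_list_update_eq)
    ultimately show "y[j := True] \<in> {x. y \<in> cloud x \<and> y \<noteq> x}"
      by simp
  qed
qed

lemma card_parents: "card (parents y) = length y - weight y"
proof -
  have "inj_on (\<lambda>j. y[j := True]) {j. j < length y \<and> \<not> y ! j}"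
  proof (rule inj_onI)
    fix a b assume a: "a \<in> {j. j < length y \<and> \<not> y ! j}" and eq: "y[a := True] = y[b := True]"
    have "y[b := True] ! a"
      using a by (simp flip: eq)
    with a show "a = b"
      by (cases "a = b") auto
  qed
  then show ?thesis
    unfolding parents_eq_image by (simp add: card_image card_zero_positions)
qed

lemma weight_parent:
  assumes "x \<in> parents y"
  shows "weight x = weight y + 1"
proof -
  have "x \<in> (\<lambda>j. y[j := True]) ` {j. j < length y \<and> \<not> y ! j}"
    using assms by (simp add: parents_eq_image)
  then obtain j where j: "j < length y" "\<not> y ! j" "x = y[j := True]"
    by auto
  then have "{i. i < length x \<and> x ! i} = insert j {i. i < length y \<and> y ! i}"
    by (auto simp: nth_list_update)
  then show ?thesis
    using j(2) by (simp add: weight_def)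
qed

lemma card_words_of_weight: "card {u. length u = n \<and> weight u = w} = n choose w"
proof -
  let ?word = "\<lambda>A. map (\<lambda>i. i \<in> A) [0..<n]"
  have inj: "inj_on ?word {A. A \<subseteq> {..<n} \<and> card A = w}"
    by (rule inj_onI) (fastforce simp: list_eq_iff_nth_eq)
  have image: "?word ` {A. A \<subseteq> {..<n} \<and> card A = w} = {u. length u = n \<and> weight u = w}"
  proof (intro equalityI subsetI)
    fix u assume "u \<in> ?word ` {A. A \<subseteq> {..<n} \<and> card A = w}"
    then obtain A where "A \<subseteq> {..<n}" "card A = w" "u = ?word A" by auto
    moreover from this have "{i. i < n \<and> u ! i} = A" by auto
    ultimately show "u \<in> {u. length u = n \<and> weight u = w}"
      by (simp add: weight_def)
  next
    fix u assume u: "u \<in> {u. length u = n \<and> weight u = w}"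
    then have "u = ?word {i. i < n \<and> u ! i}"
      by (simp add: list_eq_iff_nth_eq)
    with u show "u \<in> ?word ` {A. A \<subseteq> {..<n} \<and> card A = w}"
      by (intro image_eqI[of _ _ "{i. i < n \<and> u ! i}"]) (auto simp: weight_def)
  qed
  show ?thesis
    using card_image[OF inj] n_subsets[of "{..<n}" w] by (simp add: image)
qed

lemma sum_words_by_weight:
  "(\<Sum>u | length u = n. f (weight u)) = (\<Sum>w\<le>n. of_nat (n choose w) * f w)"
proof -
  have "weight ` {u. length u = n} \<subseteq> {..n}"
    using weight_le_length by auto
  then have "(\<Sum>u | length u = n. f (weight u)) =
      (\<Sum>w\<le>n. \<Sum>u | length u = n \<and> weight u = w. f (weight u))"
    using sum.group[OF finite_words finite_atMost, where g = weight and h = "\<lambda>u. f (weight u)"] by simp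
  also have "\<dots> = (\<Sum>w\<le>n. of_nat (n choose w) * f w)"
    by (rule sum.cong) (simp_all add: card_words_of_weight)
  finally show ?thesis .
qed

lemma sum_parents_weight:
  "(\<Sum>x\<in>parents y. f (weight x)) = of_nat (length y - weight y) * f (weight y + 1)"
proof -
  have "(\<Sum>x\<in>parents y. f (weight x)) = (\<Sum>x\<in>parents y. f (weight y + 1))"
    by (rule sum.cong) (simp_all add: weight_parent)
  then show ?thesis
    by (simp add: card_parents)
qed

definition received_tails ::
  "(nat \<Rightarrow> bool list) \<Rightarrow> (nat \<Rightarrow> bool list \<Rightarrow> bool list) \<Rightarrow> nat \<Rightarrow> bool list \<Rightarrow> bool list set" where
  "received_tails f1 f2 m y1 = (if y1 = f1 m then cloud (f2 m y1) else {f2 m y1})"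

lemma outputs_eq:
  "outputs f1 f2 m = {y1 @ y2 | y1 y2. y1 \<in> cloud (f1 m) \<and> y2 \<in> received_tails f1 f2 m y1}"
  unfolding outputs_def received_tails_def by auto

lemma outputs_disjointI:
  assumes "length (f1 m) = length (f1 m')"
    and "\<And>y1. y1 \<in> cloud (f1 m) \<Longrightarrow> y1 \<in> cloud (f1 m') \<Longrightarrow>
      received_tails f1 f2 m y1 \<inter> received_tails f1 f2 m' y1 = {}"
  shows "outputs f1 f2 m \<inter> outputs f1 f2 m' = {}"
proof (rule equals0I)
  fix z assume "z \<in> outputs f1 f2 m \<inter> outputs f1 f2 m'"
  then obtain y1 y2 y1' y2' where
    "z = y1 @ y2" "y1 \<in> cloud (f1 m)" "y2 \<in> received_tails f1 f2 m y1" and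
    "z = y1' @ y2'" "y1' \<in> cloud (f1 m')" "y2' \<in> received_tails f1 f2 m' y1'"
    unfolding outputs_eq by blast
  moreover from this have "length y1 = length y1'"
    using assms(1) length_cloud by metis
  ultimately show False
    using assms(2) by auto
qed

definition free_point_labelling ::
  "nat \<Rightarrow> nat \<Rightarrow> (bool list \<Rightarrow> bool list set) \<Rightarrow> (bool list \<Rightarrow> bool list \<times> bool list \<Rightarrow> bool list) \<Rightarrow> bool"
where
  "free_point_labelling n1 n2 D g \<longleftrightarrow> (\<forall>y. length y = n1 \<longrightarrow>
     g y ` (SIGMA u:parents y. D u) \<subseteq> free_points n2 (D y) \<and> inj_on (g y) (SIGMA u:parents y. D u))"

lemma free_point_labelling_exists:
  fixes D :: "bool list \<Rightarrow> bool list set"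
  assumes codes: "\<And>u. length u = n1 \<Longrightarrow> asym_code n2 (D u)"
    and fit: "\<And>y. length y = n1 \<Longrightarrow> (\<Sum>u\<in>parents y. card (D u)) \<le> card (free_points n2 (D y))"
  shows "\<exists>g. free_point_labelling n1 n2 D g"
proof -
  have "\<exists>h. h ` (SIGMA u:parents y. D u) \<subseteq> free_points n2 (D y) \<and> inj_on h (SIGMA u:parents y. D u)"
    if y: "length y = n1" for y
  proof (rule card_le_inj)
    have "parents y \<subseteq> {u. length u = n1}"
      using y length_parent by blast
    then have parents: "finite (parents y)"
      using finite_words by (rule finite_subset)
    have codes: "\<And>u. u \<in> parents y \<Longrightarrow> finite (D u)"
      using y length_parent codes finite_asym_code by metis
    show "finite (SIGMA u:parents y. D u)"
      using parents codes by (rule finite_SigmaI)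
    show "card (SIGMA u:parents y. D u) \<le> card (free_points n2 (D y))"
      using fit[OF y] card_SigmaI[OF parents ballI[OF codes]] by simp
  qed (rule finite_free_points)
  then have "\<forall>y. \<exists>h. length y = n1 \<longrightarrow>
      h ` (SIGMA u:parents y. D u) \<subseteq> free_points n2 (D y) \<and> inj_on h (SIGMA u:parents y. D u)"
    by blast
  then show ?thesis
    unfolding free_point_labelling_def by (rule choice)
qed

text \<open>The last case cannot occur with at most one error; it only makes the function total.\<close>
definition second_block ::
  "nat \<Rightarrow> (bool list \<Rightarrow> bool list \<times> bool list \<Rightarrow> bool list) \<Rightarrow> bool list \<times> bool list \<Rightarrow> bool list \<Rightarrow> bool list"
where
  "second_block n2 g p y =
     (if y = fst p then snd p else if fst p \<in> parents y then g y p else replicate n2 False)"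

lemma free_point_labelling_free:
  assumes "free_point_labelling n1 n2 D g" "length y = n1" "u \<in> parents y" "c \<in> D u"
  shows "g y (u, c) \<in> free_points n2 (D y)"
  using assms unfolding free_point_labelling_def by blast

lemma length_second_block:
  assumes g: "free_point_labelling n1 n2 D g"
    and "asym_code n2 (D u)" "c \<in> D u" "length y = n1"
  shows "length (second_block n2 g (u, c) y) = n2"
proof -
  have "length c = n2"
    using assms(2,3) unfolding asym_code_def by blast
  moreover have "length (g y (u, c)) = n2" if "u \<in> parents y"
    using free_point_labelling_free[OF g assms(4) that assms(3)] by (simp add: free_points_def)
  ultimately show ?thesis
    by (simp add: second_block_def)
qed

lemma tails_disjoint:
  assumes codes: "\<And>u. length u = n1 \<Longrightarrow> asym_code n2 (D u)"
    and g: "free_point_labelling n1 n2 D g"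
    and uc: "length u = n1" "c \<in> D u" and uc': "length u' = n1" "c' \<in> D u'"
    and distinct: "(u, c) \<noteq> (u', c')" and y: "y \<in> cloud u" "y \<in> cloud u'"
  shows "(if y = u then cloud c else {g y (u, c)}) \<inter> (if y = u' then cloud c' else {g y (u', c')}) = {}"
proof -
  have "length y = n1"
    using y(1) uc(1) length_cloud by metis
  note free = free_point_labelling_free[OF g this]
  consider "y = u" "y = u'" | "y = u" "y \<noteq> u'" | "y \<noteq> u" "y = u'" | "y \<noteq> u" "y \<noteq> u'"
    by blast
  then show ?thesis
  proof cases
    case 1
    with codes[OF uc(1)] uc(2) uc'(2) distinct show ?thesis
      unfolding asym_code_def by auto
  next
    case 2
    with free[of u' c'] y(2) uc(2) uc'(2) show ?thesis
      by (auto simp: parents_def free_points_def)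
  next
    case 3
    with free[of u c] y(1) uc(2) uc'(2) show ?thesis
      by (auto simp: parents_def free_points_def)
  next
    case 4
    then have "(u, c) \<in> (SIGMA u:parents y. D u)" "(u', c') \<in> (SIGMA u:parents y. D u)"
      using y uc(2) uc'(2) by (auto simp: parents_def)
    then have "g y (u, c) \<noteq> g y (u', c')"
      using g \<open>length y = n1\<close> distinct unfolding free_point_labelling_def by (metis inj_onD)
    with 4 show ?thesis
      by simp
  qed
qed

lemma transmits_if_parents_fit_free_points:
  fixes D :: "bool list \<Rightarrow> bool list set"
  assumes codes: "\<And>u. length u = n1 \<Longrightarrow> asym_code n2 (D u)"
    and fit: "\<And>y. length y = n1 \<Longrightarrow> (\<Sum>u\<in>parents y. card (D u)) \<le> card (free_points n2 (D y))"
  shows "\<exists>f1 f2. transmits n1 n2 (\<Sum>u | length u = n1. card (D u)) f1 f2"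
proof -
  define S where "S = (SIGMA u:{u. length u = n1}. D u)"
  have finite_D: "finite (D u)" if "length u = n1" for u
    using codes[OF that] by (rule finite_asym_code)
  have "finite S"
    unfolding S_def using finite_words finite_D by blast
  then obtain e where e: "bij_betw e {..<card S} S"
    using ex_bij_betw_nat_finite by (metis atLeast0LessThan)
  have card_S: "card S = (\<Sum>u | length u = n1. card (D u))"
    unfolding S_def using finite_words finite_D by simp
  obtain g where g: "free_point_labelling n1 n2 D g"
    using free_point_labelling_exists[OF codes fit] by blast
  define f1 where "f1 m = fst (e m)" for m
  define f2 where "f2 m = second_block n2 g (e m)" for m
  have message: "\<exists>u c. e m = (u, c) \<and> length u = n1 \<and> c \<in> D u" if "m < card S" for m
    using bij_betw_apply[OF e, of m] that unfolding S_def by blast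
  have tails: "received_tails f1 f2 m y = (if y = u then cloud c else {g y (u, c)})"
    if "e m = (u, c)" "y \<in> cloud u" for m u c y
    using that unfolding received_tails_def f1_def f2_def second_block_def parents_def by simp
  have "transmits n1 n2 (card S) f1 f2"
    unfolding transmits_def
  proof (intro conjI allI impI)
    fix m and y :: "bool list" assume "m < card S"
    then obtain u c where "e m = (u, c)" "length u = n1" "c \<in> D u"
      using message by blast
    then show "length (f1 m) = n1" and "length y = n1 \<Longrightarrow> length (f2 m y) = n2"
      using length_second_block[OF g codes] by (simp_all add: f1_def f2_def)
  next
    fix m m' assume m: "m < card S" and m': "m' < card S" and "m \<noteq> m'"
    obtain u c u' c' where uc: "e m = (u, c)" "length u = n1" "c \<in> D u"
      and uc': "e m' = (u', c')" "length u' = n1" "c' \<in> D u'"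
      using message m m' by metis
    have "e m \<noteq> e m'"
      using e m m' \<open>m \<noteq> m'\<close> by (metis bij_betw_def inj_onD lessThan_iff)
    then have distinct: "(u, c) \<noteq> (u', c')"
      using uc(1) uc'(1) by simp
    show "outputs f1 f2 m \<inter> outputs f1 f2 m' = {}"
    proof (rule outputs_disjointI)
      show "length (f1 m) = length (f1 m')"
        using uc uc' by (simp add: f1_def)
      fix y assume "y \<in> cloud (f1 m)" "y \<in> cloud (f1 m')"
      with uc(1) uc'(1) show "received_tails f1 f2 m y \<inter> received_tails f1 f2 m' y = {}"
        using tails_disjoint[OF codes g uc(2,3) uc'(2,3) distinct] tails by (simp add: f1_def)
    qed
  qed
  then show ?thesis
    unfolding card_S by blast
qed

theorem corollary2:
  fixes n1 n2 :: nat and C :: "nat \<Rightarrow> bool list set" and M F :: "nat \<Rightarrow> nat"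
  assumes codes: "\<forall>w\<le>n1. asym_code n2 (C w)"
    and cardM: "\<forall>w\<le>n1. card (C w) = M w"
    and cardF: "\<forall>w\<le>n1. card (free_points n2 (C w)) = F w"
    and cond: "\<forall>w<n1. (n1 - w) * M (w + 1) \<le> F w"
  shows "\<exists>f1 f2. transmits n1 n2 (\<Sum>w\<le>n1. (n1 choose w) * M w) f1 f2"
proof -
  have "\<exists>f1 f2. transmits n1 n2 (\<Sum>u | length u = n1. card (C (weight u))) f1 f2"
  proof (rule transmits_if_parents_fit_free_points)
    fix u :: "bool list" assume "length u = n1"
    then show "asym_code n2 (C (weight u))"
      using codes weight_le_length by metis
  next
    fix y :: "bool list" assume y: "length y = n1"
    have "(\<Sum>u\<in>parents y. card (C (weight u))) = (n1 - weight y) * card (C (weight y + 1))"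
      using y sum_parents_weight[of "\<lambda>w. card (C w)" y] by simp
    also have "\<dots> \<le> card (free_points n2 (C (weight y)))"
      using cardM cardF cond y weight_le_length[of y] by (cases "weight y < n1") auto
    finally show "(\<Sum>u\<in>parents y. card (C (weight u))) \<le> card (free_points n2 (C (weight y)))" .
  qed
  moreover have "(\<Sum>u | length u = n1. card (C (weight u))) = (\<Sum>w\<le>n1. (n1 choose w) * M w)"
    unfolding sum_words_by_weight[of "\<lambda>w. card (C w)"] using cardM by simp
  ultimately show ?thesis
    by simp
qed

end
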